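(* Every Bernstein set $B\subseteq\mathbb R^2$ is a $2$-I-covering.
   Context: A set $B\subseteq\mathbb R^2$ is a Bernstein set if for every uncountable Borel $Z\subseteq\mathbb R^2$ both $Z\cap B$ and $Z\setminus B$ are nonempty. A set $A\subseteq\mathbb R^2$ is a $2$-I-covering if for every $C\subseteq\mathbb R^2$ with $|C|=2$ there is an isometry $\phi$ of the Euclidean plane with $\phi[C]\subseteq A$. *)

theory Defs
  imports "HOL-Analysis.Analysis"
begin

definition bernstein_set :: "(real^2) set \<Rightarrow> bool" where
  "bernstein_set B \<longleftrightarrow>
     (\<forall>Z. Z \<in> sets borel \<and> uncountable Z \<longrightarrow> Z \<inter> B \<noteq> {} \<and> Z - B \<noteq> {})"

definition plane_isometry :: "(real^2 \<Rightarrow> real^2) \<Rightarrow> bool" where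
  "plane_isometry f \<longleftrightarrow> bij f \<and> (\<forall>x y. dist (f x) (f y) = dist x y)"

definition I_covering :: "nat \<Rightarrow> (real^2) set \<Rightarrow> bool" where
  "I_covering n A \<longleftrightarrow>
     (\<forall>C :: (real^2) set. finite C \<and> card C = n \<longrightarrow> (\<exists>\<phi>. plane_isometry \<phi> \<and> \<phi> ` C \<subseteq> A))"

end

theory Submission
  imports Defs
begin

text \<open>A Bernstein set meets every uncountable closed set. So it contains a point \<open>p\<close>,
  and it meets the circle of radius \<open>dist a b\<close> around \<open>p\<close> in some point \<open>q\<close>; a rigid motion
  then carries \<open>{a, b}\<close> onto \<open>{p, q}\<close>.\<close>

lemma bernstein_set_meets_uncountable:
  assumes "bernstein_set B" "Z \<in> sets borel" "uncountable Z"
  shows "Z \<inter> B \<noteq> {}"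
  using assms unfolding bernstein_set_def by simp

lemma uncountable_sphere:
  fixes p :: "'a::euclidean_space"
  assumes "2 \<le> DIM('a)" "r > 0"
  shows "uncountable (sphere p r)"
proof -
  define v :: 'a where "v = r *\<^sub>R (SOME i. i \<in> Basis)"
  have "norm v = r"
    using \<open>r > 0\<close> by (simp add: v_def SOME_Basis)
  then have "p + v \<in> sphere p r" "p - v \<in> sphere p r"
    by (auto simp: dist_norm)
  moreover have "p + v \<noteq> p - v"
    using \<open>norm v = r\<close> \<open>r > 0\<close> by (auto simp: algebra_simps simp flip: scaleR_2)
  ultimately show ?thesis
    using connected_sphere[OF assms(1)] connected_uncountable by metis
qed

lemma plane_isometry_rigid_motion:
  assumes "orthogonal_transformation f"
  shows "plane_isometry (\<lambda>x. p + f (x - a))"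
  unfolding plane_isometry_def
proof
  have "bij ((\<lambda>y. p + y) \<circ> f \<circ> (\<lambda>x. x - a))"
    using orthogonal_transformation_bij[OF assms]
    by (intro bij_comp bij_plus bij_diff_right)
  then show "bij (\<lambda>x. p + f (x - a))"
    by (simp add: comp_def)
  have "dist (p + f (x - a)) (p + f (y - a)) = dist x y" for x y
  proof -
    have "dist (p + f (x - a)) (p + f (y - a)) = dist (x - a) (y - a)"
      using assms unfolding orthogonal_transformation_isometry by simp
    also have "\<dots> = dist x y"
      by (simp add: dist_norm)
    finally show ?thesis .
  qed
  then show "\<forall>x y. dist (p + f (x - a)) (p + f (y - a)) = dist x y"
    by blast
qed

lemma plane_isometry_exists_pair:
  fixes a b p q :: "real^2"
  assumes "dist a b = dist p q"
  shows "\<exists>\<phi>. plane_isometry \<phi> \<and> \<phi> a = p \<and> \<phi> b = q"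
proof -
  have "norm (b - a) = norm (q - p)"
    using assms by (simp add: dist_norm norm_minus_commute)
  then obtain f where f: "orthogonal_transformation f" "f (b - a) = q - p"
    by (rule orthogonal_transformation_exists)
  have "f 0 = 0"
    using f(1) by (simp add: orthogonal_transformation_linear linear_0)
  then show ?thesis
    using plane_isometry_rigid_motion[OF f(1), of p a] f(2) by force
qed

theorem mainTheorem16:
  fixes B :: "(real^2) set"
  assumes "bernstein_set B"
  shows "I_covering 2 B"
  unfolding I_covering_def
proof (intro allI impI)
  fix C :: "(real^2) set"
  assume "finite C \<and> card C = 2"
  then obtain a b where C: "C = {a, b}" and "a \<noteq> b"
    by (metis card_2_iff)
  have "uncountable (UNIV :: (real^2) set)"
    using uncountable_ball[of 1 "0::real^2"] by (meson countable_subset subset_UNIV zero_less_one)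
  then obtain p where "p \<in> B"
    using bernstein_set_meets_uncountable[OF assms space_in_borel] by blast
  have "uncountable (sphere p (dist a b))"
    using \<open>a \<noteq> b\<close> by (intro uncountable_sphere) auto
  then obtain q where "q \<in> B" "q \<in> sphere p (dist a b)"
    using bernstein_set_meets_uncountable[OF assms borel_closed[OF closed_sphere]] by blast
  then have "dist a b = dist p q"
    by simp
  obtain \<phi> where "plane_isometry \<phi>" "\<phi> a = p" "\<phi> b = q"
    using plane_isometry_exists_pair[OF \<open>dist a b = dist p q\<close>] by blast
  moreover have "\<phi> ` C \<subseteq> B"
    using \<open>\<phi> a = p\<close> \<open>\<phi> b = q\<close> \<open>p \<in> B\<close> \<open>q \<in> B\<close> unfolding C by simp
  ultimately show "\<exists>\<phi>. plane_isometry \<phi> \<and> \<phi> ` C \<subseteq> B"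
    by blast
qed

end
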